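(* Let $(\mathcal{Y}_i)_{i\in[K]}$ be any family of pairwise disjoint measurable subsets of $\mathcal{Y}$ with $P_Y(\mathcal{Y}_i)>0$ for every $i$, and put $\tilde{\mathcal{Y}}=\bigcup_{i=1}^K\mathcal{Y}_i$. Let $f^*_{\mathcal{X}}:\mathcal{X}\to\mathbb{R}^d$, $f^*_{\mathcal{Y}}:\mathcal{Y}\to\mathbb{R}^d$ and $\tau^*>0$ satisfy, for some constant $\Gamma\in\mathbb{R}$, $$g^*(x,y):=\frac{1}{\tau^*}f^*_{\mathcal{X}}(x)^\top f^*_{\mathcal{Y}}(y)=\ln\frac{p(x,y)}{p(x)p(y)}+\Gamma$$ for every $x\in\operatorname{supp}p_X$ and every $y\in\tilde{\mathcal{Y}}$. Let $\bar h^{g^*}(x)=\bar W^\top f^*_{\mathcal{X}}(x)+\bar b$ with $\bar W=[\bar w_1,\dots,\bar w_K]$, $\bar w_i=\mathbb{E}_{y\sim p_Y(\cdot\mid\mathcal{Y}_i)}[\tfrac{1}{\tau^*}f^*_{\mathcal{Y}}(y)]$ and $\bar b=(\ln P_Y(\mathcal{Y}_1),\dots,\ln P_Y(\mathcal{Y}_K))^\top$. Then $$\mathcal{L}_{\sup}(\bar h^{g^*})-\mathcal{L}_{\sup}(h^* )\le \mathbb{E}_{x\sim p_X}\Big[\mathrm{KL}\big(P_C(\cdot\mid x)\,\big\|\,P_C(\cdot\mid x;(\mathcal{Y}_i)_{i\in[K]})\big)\Big]+\mathbb{E}_{(x,c)\sim p(x,c)}\Big[\mathrm{KL}\big(p_Y(\cdot\mid\mathcal{Y}_c)\,\big\|\,p_Y(\cdot\mid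 x,\mathcal{Y}_c)\big)\Big].$$
   Context: $\mathcal{X},\mathcal{Y}$ are input spaces; $(X,Y)$ has joint density $p(x,y)=p_{X,Y}(x,y)$ with marginal densities $p(x)=p_X(x)$, $p(y)=p_Y(y)$ and conditional density $p(y\mid x)$. For $\mathcal{Y}'\subseteq\mathcal{Y}$, $P_Y(\mathcal{Y}')=\int_{\mathcal{Y}'}p(y)\,dy$ and $P_Y(\mathcal{Y}'\mid x)=\int_{\mathcal{Y}'}p(y\mid x)\,dy$. $[K]=\{1,\dots,K\}$. Labels: $C\in[K]$ with conditional probability $P_C(c\mid x)$, and $p(x,c)=P_C(c\mid x)p_X(x)$. For $h:\mathcal{X}\to\mathbb{R}^K$, $\mathcal{L}_{\sup}(h)=\mathbb{E}_{(x,c)\sim p(x,c)}\big[-\ln\frac{\exp h(x)_c}{\sum_{i=1}^K\exp h(x)_i}\big]$, and $h^*$ denotes a minimizer of $\mathcal{L}_{\sup}$ over all measurable $h$ (e.g. $h^*(x)_i=\ln P_C(i\mid x)$), so $\mathcal{L}_{\sup}(h^* )=\mathbb{E}_{p(x)}[H(P_C(\cdot\mid x))]$. Definitions: $p_Y(y\mid\mathcal{Y}_i)=p(y)/P_Y(\mathcal{Y}_i)$ if $y\in\mathcal{Y}_i$ and $0$ otherwise; $p_Y(y\mid x,\mathcal{Y}_i)=p(y\mid x)/P_Y(\mathcal{Y}_i\mid x)$ if $y\in\mathcal{Y}_i$ and $0$ otherwise; $P_C(c\mid x;(\mathcal{Y}_i)_{i\in[K]})=P_Y(\mathcal{Y}_c\mid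 x)/P_Y(\tilde{\mathcal{Y}}\mid x)$, a probability distribution on $[K]$. All expectations and KL divergences are assumed to be well defined and finite (in particular $P_Y(\mathcal{Y}_i\mid x)>0$ for $x\in\operatorname{supp}p_X$). *)

theory Defs
  imports "HOL-Analysis.Analysis"
begin

text \<open>Setting: the input spaces are measure spaces MX, MY (reference measures, e.g.
Lebesgue); p :: 'x => 'y => real is the joint density of (X,Y) w.r.t. MX (x) MY.
Labels range over [K] = {1..K}; PC x c is P_C(c | x).  Vectors in R^K are
functions nat => real read on {1..K}.\<close>

definition margX :: "'x measure \<Rightarrow> 'y measure \<Rightarrow> ('x \<Rightarrow> 'y \<Rightarrow> real) \<Rightarrow> 'x \<Rightarrow> real" where
  "margX MX MY p x = (\<integral>y. p x y \<partial>MY)"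

definition margY :: "'x measure \<Rightarrow> 'y measure \<Rightarrow> ('x \<Rightarrow> 'y \<Rightarrow> real) \<Rightarrow> 'y \<Rightarrow> real" where
  "margY MX MY p y = (\<integral>x. p x y \<partial>MX)"

definition condY :: "'x measure \<Rightarrow> 'y measure \<Rightarrow> ('x \<Rightarrow> 'y \<Rightarrow> real) \<Rightarrow> 'x \<Rightarrow> 'y \<Rightarrow> real" where
  "condY MX MY p x y = p x y / margX MX MY p x"

definition probY :: "'x measure \<Rightarrow> 'y measure \<Rightarrow> ('x \<Rightarrow> 'y \<Rightarrow> real) \<Rightarrow> 'y set \<Rightarrow> real" where
  "probY MX MY p A = set_lebesgue_integral MY A (margY MX MY p)"

definition probY_cond :: "'x measure \<Rightarrow> 'y measure \<Rightarrow> ('x \<Rightarrow> 'y \<Rightarrow> real) \<Rightarrow> 'x \<Rightarrow> 'y set \<Rightarrow> real" where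
  "probY_cond MX MY p x A = set_lebesgue_integral MY A (condY MX MY p x)"

definition densY_restr :: "'x measure \<Rightarrow> 'y measure \<Rightarrow> ('x \<Rightarrow> 'y \<Rightarrow> real) \<Rightarrow> 'y set \<Rightarrow> 'y \<Rightarrow> real" where
  "densY_restr MX MY p A y = (if y \<in> A then margY MX MY p y / probY MX MY p A else 0)"

definition densY_restr_cond :: "'x measure \<Rightarrow> 'y measure \<Rightarrow> ('x \<Rightarrow> 'y \<Rightarrow> real) \<Rightarrow> 'x \<Rightarrow> 'y set \<Rightarrow> 'y \<Rightarrow> real" where
  "densY_restr_cond MX MY p x A y = (if y \<in> A then condY MX MY p x y / probY_cond MX MY p x A else 0)"

definition Ytilde :: "nat \<Rightarrow> (nat \<Rightarrow> 'y set) \<Rightarrow> 'y set" where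
  "Ytilde K Ys = (\<Union>i\<in>{1..K}. Ys i)"

definition PC_Y :: "'x measure \<Rightarrow> 'y measure \<Rightarrow> ('x \<Rightarrow> 'y \<Rightarrow> real) \<Rightarrow> nat \<Rightarrow> (nat \<Rightarrow> 'y set) \<Rightarrow> 'x \<Rightarrow> nat \<Rightarrow> real" where
  "PC_Y MX MY p K Ys x c = probY_cond MX MY p x (Ys c) / probY_cond MX MY p x (Ytilde K Ys)"

definition kl_pt :: "real \<Rightarrow> real \<Rightarrow> real" where
  "kl_pt a b = (if a = 0 then 0 else a * ln (a / b))"

definition KL_fin :: "nat \<Rightarrow> (nat \<Rightarrow> real) \<Rightarrow> (nat \<Rightarrow> real) \<Rightarrow> real" where
  "KL_fin K P Q = (\<Sum>c=1..K. kl_pt (P c) (Q c))"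

definition KL_dens :: "'y measure \<Rightarrow> ('y \<Rightarrow> real) \<Rightarrow> ('y \<Rightarrow> real) \<Rightarrow> real" where
  "KL_dens M f g = (\<integral>y. kl_pt (f y) (g y) \<partial>M)"

definition softmax_nll :: "nat \<Rightarrow> (nat \<Rightarrow> real) \<Rightarrow> nat \<Rightarrow> real" where
  "softmax_nll K v c = - ln (exp (v c) / (\<Sum>i=1..K. exp (v i)))"

definition Lsup_integrand :: "'x measure \<Rightarrow> 'y measure \<Rightarrow> ('x \<Rightarrow> 'y \<Rightarrow> real) \<Rightarrow> ('x \<Rightarrow> nat \<Rightarrow> real) \<Rightarrow> nat \<Rightarrow> ('x \<Rightarrow> nat \<Rightarrow> real) \<Rightarrow> 'x \<Rightarrow> real" where
  "Lsup_integrand MX MY p PC K h x = margX MX MY p x * (\<Sum>c=1..K. PC x c * softmax_nll K (h x) c)"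

definition Lsup :: "'x measure \<Rightarrow> 'y measure \<Rightarrow> ('x \<Rightarrow> 'y \<Rightarrow> real) \<Rightarrow> ('x \<Rightarrow> nat \<Rightarrow> real) \<Rightarrow> nat \<Rightarrow> ('x \<Rightarrow> nat \<Rightarrow> real) \<Rightarrow> real" where
  "Lsup MX MY p PC K h = (\<integral>x. Lsup_integrand MX MY p PC K h x \<partial>MX)"

definition wbar_integrand :: "'x measure \<Rightarrow> 'y measure \<Rightarrow> ('x \<Rightarrow> 'y \<Rightarrow> real) \<Rightarrow> ('y \<Rightarrow> real^'d) \<Rightarrow> real \<Rightarrow> 'y set \<Rightarrow> 'y \<Rightarrow> real^'d" where
  "wbar_integrand MX MY p fY tau A y = densY_restr MX MY p A y *\<^sub>R ((1 / tau) *\<^sub>R fY y)"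

definition wbar :: "'x measure \<Rightarrow> 'y measure \<Rightarrow> ('x \<Rightarrow> 'y \<Rightarrow> real) \<Rightarrow> ('y \<Rightarrow> real^'d) \<Rightarrow> real \<Rightarrow> 'y set \<Rightarrow> real^'d" where
  "wbar MX MY p fY tau A = (\<integral>y. wbar_integrand MX MY p fY tau A y \<partial>MY)"

definition hbar :: "'x measure \<Rightarrow> 'y measure \<Rightarrow> ('x \<Rightarrow> 'y \<Rightarrow> real) \<Rightarrow> ('x \<Rightarrow> real^'d) \<Rightarrow> ('y \<Rightarrow> real^'d) \<Rightarrow> real \<Rightarrow> (nat \<Rightarrow> 'y set) \<Rightarrow> 'x \<Rightarrow> nat \<Rightarrow> real" where
  "hbar MX MY p fX fY tau Ys x i = wbar MX MY p fY tau (Ys i) \<bullet> fX x + ln (probY MX MY p (Ys i))"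

end

theory Submission
  imports Defs
begin

text \<open>
  Integrating the pointwise-mutual-information identity for \<open>g*(x, y)\<close> against
  \<open>p_Y(y | Y_c)\<close> shows that the linear-probe logits are
  \<open>h(x)_c = - KL(p_Y(. | Y_c) || p_Y(. | x, Y_c)) + ln P_Y(Y_c | x) + \<Gamma>\<close>.
  Since these KL terms are nonnegative and the \<open>P_Y(Y_c | x)\<close> add up to
  \<open>P_Y(Y~ | x)\<close>, the log-partition function of \<open>h(x)\<close> is at most
  \<open>\<Gamma> + ln P_Y(Y~ | x)\<close>; hence the cross-entropy of \<open>h(x)\<close> against \<open>P_C(. | x)\<close>
  exceeds the entropy of \<open>P_C(. | x)\<close> by at most the two KL terms of the claim.
  By Gibbs' inequality that entropy is a lower bound for the cross-entropy of \<open>h*(x)\<close>,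
  and integrating over \<open>x\<close> gives the theorem.
\<close>

lemma kl_pt_ge_diff:
  fixes a b :: real
  assumes "0 \<le> a" "0 \<le> b" "0 < a \<Longrightarrow> 0 < b"
  shows "a - b \<le> kl_pt a b"
proof (cases "a = 0")
  case True
  then show ?thesis using assms by (simp add: kl_pt_def)
next
  case False
  then have a: "0 < a" and b: "0 < b" using assms by auto
  have "a * ln (b / a) \<le> a * (b / a - 1)"
    using a b by (intro mult_left_mono ln_le_minus_one) auto
  also have "\<dots> = b - a" using a by (simp add: field_simps)
  finally have "a * ln (b / a) \<le> b - a" .
  moreover have "kl_pt a b = - (a * ln (b / a))"
    using a b False by (simp add: kl_pt_def ln_div algebra_simps)
  ultimately show ?thesis by linarith
qed

lemma kl_pt_split: "0 \<le> a \<Longrightarrow> 0 < b \<Longrightarrow> kl_pt a b = kl_pt a 1 - a * ln b"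
  by (cases "a = 0") (simp_all add: kl_pt_def ln_div right_diff_distrib)

lemma KL_fin_nonneg:
  assumes "\<And>c. c \<in> {1..K} \<Longrightarrow> 0 \<le> P c" "\<And>c. c \<in> {1..K} \<Longrightarrow> 0 < Q c"
    and "(\<Sum>c=1..K. Q c) \<le> (\<Sum>c=1..K. P c)"
  shows "0 \<le> KL_fin K P Q"
proof -
  have "0 \<le> (\<Sum>c=1..K. P c - Q c)" using assms(3) by (simp add: sum_subtractf)
  also have "\<dots> \<le> KL_fin K P Q"
    unfolding KL_fin_def using assms(1,2) by (intro sum_mono kl_pt_ge_diff) (auto intro: less_imp_le)
  finally show ?thesis .
qed

text \<open>\<open>kl_pt q 1 = q ln q\<close> with the convention \<open>0 ln 0 = 0\<close>.\<close>
definition entropy_fin :: "nat \<Rightarrow> (nat \<Rightarrow> real) \<Rightarrow> real" where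
  "entropy_fin K P = - (\<Sum>c=1..K. kl_pt (P c) 1)"

lemma softmax_nll_eq:
  "c \<in> {1..K} \<Longrightarrow> softmax_nll K v c = ln (\<Sum>i=1..K. exp (v i)) - v c"
proof -
  assume "c \<in> {1..K}"
  then have "0 < (\<Sum>i=1..K. exp (v i))" by (intro sum_pos) auto
  then show ?thesis unfolding softmax_nll_def by (simp add: ln_div)
qed

lemma entropy_fin_le_cross_entropy:
  assumes P0: "\<And>c. c \<in> {1..K} \<Longrightarrow> 0 \<le> P c" and P1: "(\<Sum>c=1..K. P c) = 1"
  shows "entropy_fin K P \<le> (\<Sum>c=1..K. P c * softmax_nll K v c)"
proof -
  define Z where "Z = (\<Sum>i=1..K. exp (v i))"
  have "{1..K} \<noteq> {}" using P1 by (metis sum.empty zero_neq_one)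
  then have Z: "0 < Z" unfolding Z_def by (intro sum_pos) auto
  have "0 \<le> KL_fin K P (\<lambda>c. exp (v c) / Z)"
    using P0 P1 Z by (intro KL_fin_nonneg) (auto simp: Z_def sum_divide_distrib[symmetric])
  also have "\<dots> = (\<Sum>c=1..K. kl_pt (P c) 1 + P c * softmax_nll K v c)"
    unfolding KL_fin_def softmax_nll_def Z_def[symmetric]
    using Z P0 by (intro sum.cong refl) (simp add: kl_pt_split[of _ "exp (v _) / Z"])
  also have "\<dots> = (\<Sum>c=1..K. P c * softmax_nll K v c) - entropy_fin K P"
    by (simp add: entropy_fin_def sum.distrib)
  finally show ?thesis by simp
qed

lemma ln_sum_exp_le:
  fixes v a :: "nat \<Rightarrow> real"
  assumes "{1..K} \<noteq> {}" and "\<And>c. c \<in> {1..K} \<Longrightarrow> v c \<le> ln (a c) + G"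
    and "\<And>c. c \<in> {1..K} \<Longrightarrow> 0 < a c" and "(\<Sum>c=1..K. a c) \<le> T"
  shows "ln (\<Sum>c=1..K. exp (v c)) \<le> G + ln T"
proof -
  have "(\<Sum>c=1..K. exp (v c)) \<le> (\<Sum>c=1..K. exp G * a c)"
  proof (rule sum_mono)
    fix c assume c: "c \<in> {1..K}"
    have "exp (v c) \<le> exp (ln (a c) + G)" using assms(2)[OF c] by simp
    then show "exp (v c) \<le> exp G * a c" using assms(3)[OF c] by (simp add: exp_add mult.commute)
  qed
  also have "\<dots> \<le> exp G * T" using assms(4) by (simp add: sum_distrib_left[symmetric])
  finally have "ln (\<Sum>c=1..K. exp (v c)) \<le> ln (exp G * T)"
    using assms(1) by (intro ln_mono sum_pos) auto
  moreover have "0 < T" using assms(1,3,4) sum_pos[of "{1..K}" a] by fastforce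
  ultimately show ?thesis by (simp add: ln_mult)
qed

lemma KL_fin_normalized_eq:
  assumes "\<And>c. c \<in> {1..K} \<Longrightarrow> 0 \<le> P c" "\<And>c. c \<in> {1..K} \<Longrightarrow> 0 < a c" "0 < T"
  shows "KL_fin K P (\<lambda>c. a c / T) = (\<Sum>c=1..K. P c * (ln T - ln (a c))) - entropy_fin K P"
proof -
  have "KL_fin K P (\<lambda>c. a c / T) = (\<Sum>c=1..K. kl_pt (P c) 1 + P c * (ln T - ln (a c)))"
    unfolding KL_fin_def
  proof (rule sum.cong[OF refl])
    fix c assume c: "c \<in> {1..K}"
    have "0 < a c / T" using assms(2)[OF c] assms(3) by simp
    with assms(1)[OF c] have "kl_pt (P c) (a c / T) = kl_pt (P c) 1 - P c * ln (a c / T)"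
      by (rule kl_pt_split)
    then show "kl_pt (P c) (a c / T) = kl_pt (P c) 1 + P c * (ln T - ln (a c))"
      using assms(2)[OF c] assms(3) by (simp add: ln_div algebra_simps)
  qed
  then show ?thesis by (simp add: entropy_fin_def sum.distrib)
qed

lemma cross_entropy_diff_le:
  fixes P a D h v :: "nat \<Rightarrow> real"
  assumes P0: "\<And>c. c \<in> {1..K} \<Longrightarrow> 0 \<le> P c" and P1: "(\<Sum>c=1..K. P c) = 1"
    and a: "\<And>c. c \<in> {1..K} \<Longrightarrow> 0 < a c" and T: "(\<Sum>c=1..K. a c) \<le> T"
    and D: "\<And>c. c \<in> {1..K} \<Longrightarrow> 0 \<le> D c"
    and h: "\<And>c. c \<in> {1..K} \<Longrightarrow> h c = - D c + ln (a c) + G"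
  shows "(\<Sum>c=1..K. P c * softmax_nll K h c) - (\<Sum>c=1..K. P c * softmax_nll K v c)
      \<le> KL_fin K P (\<lambda>c. a c / T) + (\<Sum>c=1..K. P c * D c)"
proof -
  have ne: "{1..K} \<noteq> {}" using P1 by (metis sum.empty zero_neq_one)
  have "0 < T" using ne a T sum_pos[of "{1..K}" a] by fastforce
  have h_le: "h c \<le> ln (a c) + G" if "c \<in> {1..K}" for c
    using h[OF that] D[OF that] by simp
  have lse: "ln (\<Sum>c=1..K. exp (h c)) \<le> G + ln T"
    by (rule ln_sum_exp_le[OF ne h_le a T])
  have "(\<Sum>c=1..K. P c * softmax_nll K h c) \<le> (\<Sum>c=1..K. P c * (D c + (ln T - ln (a c))))"
  proof (rule sum_mono)
    fix c assume c: "c \<in> {1..K}"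
    have "softmax_nll K h c \<le> D c + (ln T - ln (a c))"
      using lse h[OF c] unfolding softmax_nll_eq[OF c] by linarith
    then show "P c * softmax_nll K h c \<le> P c * (D c + (ln T - ln (a c)))"
      using P0[OF c] by (rule mult_left_mono)
  qed
  also have "\<dots> = (\<Sum>c=1..K. P c * D c) + (\<Sum>c=1..K. P c * (ln T - ln (a c)))"
    by (simp add: distrib_left sum.distrib)
  also have "\<dots> = (\<Sum>c=1..K. P c * D c) + KL_fin K P (\<lambda>c. a c / T) + entropy_fin K P"
    using KL_fin_normalized_eq[of K P a T, OF P0 a \<open>0 < T\<close>] by linarith
  finally show ?thesis using entropy_fin_le_cross_entropy[of K P v, OF P0 P1] by linarith
qed

lemma set_integrable_if_set_integral_nonzero:
  "set_lebesgue_integral M A f \<noteq> 0 \<Longrightarrow> set_integrable M A f"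
  unfolding set_lebesgue_integral_def set_integrable_def by (metis not_integrable_integral_eq)

lemma
  fixes f :: "'a \<Rightarrow> real"
  assumes I: "set_lebesgue_integral M A f \<noteq> 0"
  shows integrable_normalized_restriction:
      "integrable M (\<lambda>y. if y \<in> A then f y / set_lebesgue_integral M A f else 0)"
    and integral_normalized_restriction:
      "(\<integral>y. (if y \<in> A then f y / set_lebesgue_integral M A f else 0) \<partial>M) = 1"
proof -
  have eq: "(\<lambda>y. if y \<in> A then f y / set_lebesgue_integral M A f else 0)
      = (\<lambda>y. (indicator A y *\<^sub>R f y) / set_lebesgue_integral M A f)"
    by (auto simp: indicator_def fun_eq_iff)
  show "integrable M (\<lambda>y. if y \<in> A then f y / set_lebesgue_integral M A f else 0)"
    unfolding eq using set_integrable_if_set_integral_nonzero[OF I]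
    unfolding set_integrable_def by (rule integrable_divide)
  show "(\<integral>y. (if y \<in> A then f y / set_lebesgue_integral M A f else 0) \<partial>M) = 1"
    unfolding eq using I by (simp add: set_lebesgue_integral_def del: scaleR_conv_of_real)
qed

lemma KL_dens_nonneg:
  fixes f g :: "'a \<Rightarrow> real"
  assumes "integrable M f" "integrable M g" "integrable M (\<lambda>y. kl_pt (f y) (g y))"
    and "integral\<^sup>L M f = integral\<^sup>L M g"
    and "\<And>y. y \<in> space M \<Longrightarrow> 0 \<le> f y" "\<And>y. y \<in> space M \<Longrightarrow> 0 \<le> g y"
    and "\<And>y. y \<in> space M \<Longrightarrow> 0 < f y \<Longrightarrow> 0 < g y"
  shows "0 \<le> KL_dens M f g"
proof -
  have "0 = (\<integral>y. f y - g y \<partial>M)" using assms(1,2,4) by simp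
  also have "\<dots> \<le> KL_dens M f g"
    unfolding KL_dens_def using assms by (intro integral_mono kl_pt_ge_diff) auto
  finally show ?thesis .
qed

lemma densY_restr_eq:
  "densY_restr MX MY p A
     = (\<lambda>y. if y \<in> A then margY MX MY p y / set_lebesgue_integral MY A (margY MX MY p) else 0)"
  by (simp add: fun_eq_iff densY_restr_def probY_def)

lemma densY_restr_cond_eq:
  "densY_restr_cond MX MY p x A
     = (\<lambda>y. if y \<in> A then condY MX MY p x y / set_lebesgue_integral MY A (condY MX MY p x) else 0)"
  by (simp add: fun_eq_iff densY_restr_cond_def probY_cond_def)

lemma KL_dens_densY_restr_nonneg:
  assumes P: "0 < probY MX MY p A" and a: "0 < probY_cond MX MY p x A"
    and m: "0 < margX MX MY p x"
    and pos: "\<And>y. y \<in> A \<Longrightarrow> 0 < margY MX MY p y \<and> 0 < p x y"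
    and ikl: "integrable MY (\<lambda>y. kl_pt (densY_restr MX MY p A y) (densY_restr_cond MX MY p x A y))"
  shows "0 \<le> KL_dens MY (densY_restr MX MY p A) (densY_restr_cond MX MY p x A)"
proof (rule KL_dens_nonneg[OF _ _ ikl])
  have P': "set_lebesgue_integral MY A (margY MX MY p) \<noteq> 0"
    and a': "set_lebesgue_integral MY A (condY MX MY p x) \<noteq> 0"
    using P a by (auto simp: probY_def probY_cond_def)
  show "integrable MY (densY_restr MX MY p A)" "integrable MY (densY_restr_cond MX MY p x A)"
    unfolding densY_restr_eq densY_restr_cond_eq
    by (rule integrable_normalized_restriction[OF P'], rule integrable_normalized_restriction[OF a'])
  show "integral\<^sup>L MY (densY_restr MX MY p A) = integral\<^sup>L MY (densY_restr_cond MX MY p x A)"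
    unfolding densY_restr_eq densY_restr_cond_eq
    using P' a' by (simp add: integral_normalized_restriction)
  show "0 \<le> densY_restr MX MY p A y" "0 \<le> densY_restr_cond MX MY p x A y"
    "0 < densY_restr MX MY p A y \<Longrightarrow> 0 < densY_restr_cond MX MY p x A y" for y
    using P a m pos[of y] by (auto simp: densY_restr_def densY_restr_cond_def condY_def split: if_splits)
qed

lemma wbar_inner_eq:
  fixes fX :: "'x \<Rightarrow> real^'d" and fY :: "'y \<Rightarrow> real^'d"
  assumes P: "0 < probY MX MY p A" and a: "0 < probY_cond MX MY p x A"
    and m: "0 < margX MX MY p x"
    and pos: "\<And>y. y \<in> A \<Longrightarrow> 0 < margY MX MY p y \<and> 0 < p x y"
    and g: "\<And>y. y \<in> A \<Longrightarrow>
      (1 / tau) * (fX x \<bullet> fY y) = ln (p x y / (margX MX MY p x * margY MX MY p y)) + \<Gamma>"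
    and iw: "integrable MY (wbar_integrand MX MY p fY tau A)"
    and ikl: "integrable MY (\<lambda>y. kl_pt (densY_restr MX MY p A y) (densY_restr_cond MX MY p x A y))"
  shows "wbar MX MY p fY tau A \<bullet> fX x
    = - KL_dens MY (densY_restr MX MY p A) (densY_restr_cond MX MY p x A)
      + ln (probY_cond MX MY p x A) - ln (probY MX MY p A) + \<Gamma>"
proof -
  let ?q = "densY_restr MX MY p A" and ?r = "densY_restr_cond MX MY p x A"
  let ?C = "ln (probY_cond MX MY p x A) - ln (probY MX MY p A) + \<Gamma>"
  have P': "set_lebesgue_integral MY A (margY MX MY p) \<noteq> 0"
    using P by (simp add: probY_def)
  have iq: "integrable MY ?q" and q1: "integral\<^sup>L MY ?q = 1"
    unfolding densY_restr_eq using P'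
    by (rule integrable_normalized_restriction, rule integral_normalized_restriction)
  \<comment> \<open>On \<open>A\<close>, \<open>p(x,y) / (p(x) p(y)) = (r(y) / q(y)) \<cdot> P_Y(A|x) / P_Y(A)\<close>.\<close>
  have pointwise: "wbar_integrand MX MY p fY tau A y \<bullet> fX x = - kl_pt (?q y) (?r y) + ?q y * ?C" for y
  proof (cases "y \<in> A")
    case True
    with pos have "0 < margY MX MY p y" "0 < p x y" by auto
    have "wbar_integrand MX MY p fY tau A y \<bullet> fX x = ?q y * ((1 / tau) * (fX x \<bullet> fY y))"
      by (simp add: wbar_integrand_def inner_commute)
    also have "\<dots> = ?q y * (ln (p x y / (margX MX MY p x * margY MX MY p y)) + \<Gamma>)"
      using g[OF True] by simp
    also have "\<dots> = - kl_pt (?q y) (?r y) + ?q y * ?C"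
      using True \<open>0 < margY MX MY p y\<close> \<open>0 < p x y\<close> P a m
      by (simp add: densY_restr_def densY_restr_cond_def condY_def kl_pt_def
          ln_div ln_mult field_simps)
    finally show ?thesis .
  qed (simp add: wbar_integrand_def densY_restr_def kl_pt_def)
  have "wbar MX MY p fY tau A \<bullet> fX x = (\<integral>y. wbar_integrand MX MY p fY tau A y \<bullet> fX x \<partial>MY)"
    unfolding wbar_def by (rule integral_bounded_linear[OF bounded_linear_inner_left iw, symmetric])
  also have "\<dots> = (\<integral>y. - kl_pt (?q y) (?r y) + ?q y * ?C \<partial>MY)"
    by (simp only: pointwise)
  also have "\<dots> = - KL_dens MY ?q ?r + ?C"
    using ikl iq q1 by (simp add: KL_dens_def)
  finally show ?thesis by simp
qed

lemma probY_cond_Ytilde_eq_sum: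
  assumes "\<And>i. i \<in> {1..K} \<Longrightarrow> Ys i \<in> sets MY" and "disjoint_family_on Ys {1..K}"
    and "\<And>i. i \<in> {1..K} \<Longrightarrow> probY_cond MX MY p x (Ys i) \<noteq> 0"
  shows "probY_cond MX MY p x (Ytilde K Ys) = (\<Sum>i=1..K. probY_cond MX MY p x (Ys i))"
  using assms(3) unfolding probY_cond_def Ytilde_def
  by (intro set_integral_finite_Union set_integrable_if_set_integral_nonzero assms(1,2)) auto

lemma margX_nonneg:
  "(\<And>y. y \<in> space MY \<Longrightarrow> 0 \<le> p x y) \<Longrightarrow> 0 \<le> margX MX MY p x"
  unfolding margX_def by (rule integral_nonneg_AE) simp

lemma margY_nonneg:
  "(\<And>x. x \<in> space MX \<Longrightarrow> 0 \<le> p x y) \<Longrightarrow> 0 \<le> margY MX MY p y"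
  unfolding margY_def by (rule integral_nonneg_AE) simp

lemma cross_entropy_hbar_diff_le:
  fixes fX :: "'x \<Rightarrow> real^'d" and fY :: "'y \<Rightarrow> real^'d" and P v :: "nat \<Rightarrow> real"
  assumes P0: "\<And>c. c \<in> {1..K} \<Longrightarrow> 0 \<le> P c" and P1: "(\<Sum>c=1..K. P c) = 1"
    and Ys_sets: "\<And>c. c \<in> {1..K} \<Longrightarrow> Ys c \<in> sets MY"
    and Ys_disj: "disjoint_family_on Ys {1..K}"
    and Ys_pos: "\<And>c. c \<in> {1..K} \<Longrightarrow> 0 < probY MX MY p (Ys c)"
    and m: "0 < margX MX MY p x"
    and a: "\<And>c. c \<in> {1..K} \<Longrightarrow> 0 < probY_cond MX MY p x (Ys c)"
    and nonneg: "\<And>y. y \<in> Ytilde K Ys \<Longrightarrow> 0 \<le> p x y \<and> 0 \<le> margY MX MY p y"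
    and g: "\<And>y. y \<in> Ytilde K Ys \<Longrightarrow>
      0 < p x y / (margX MX MY p x * margY MX MY p y) \<and>
      (1 / tau) * (fX x \<bullet> fY y) = ln (p x y / (margX MX MY p x * margY MX MY p y)) + \<Gamma>"
    and iw: "\<And>c. c \<in> {1..K} \<Longrightarrow> integrable MY (wbar_integrand MX MY p fY tau (Ys c))"
    and ikl: "\<And>c. c \<in> {1..K} \<Longrightarrow>
      integrable MY (\<lambda>y. kl_pt (densY_restr MX MY p (Ys c) y) (densY_restr_cond MX MY p x (Ys c) y))"
  shows "(\<Sum>c=1..K. P c * softmax_nll K (hbar MX MY p fX fY tau Ys x) c)
         - (\<Sum>c=1..K. P c * softmax_nll K v c)
      \<le> KL_fin K P (PC_Y MX MY p K Ys x)
        + (\<Sum>c=1..K. P c * KL_dens MY (densY_restr MX MY p (Ys c)) (densY_restr_cond MX MY p x (Ys c)))"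
proof -
  let ?a = "\<lambda>c. probY_cond MX MY p x (Ys c)"
  let ?KL = "\<lambda>c. KL_dens MY (densY_restr MX MY p (Ys c)) (densY_restr_cond MX MY p x (Ys c))"
  have pos: "0 < margY MX MY p y \<and> 0 < p x y" if "c \<in> {1..K}" "y \<in> Ys c" for c y
  proof -
    have "y \<in> Ytilde K Ys" using that by (auto simp: Ytilde_def)
    with nonneg g m show ?thesis by (metis divide_eq_0_iff le_less mult_eq_0_iff less_irrefl)
  qed
  have hbar: "hbar MX MY p fX fY tau Ys x c = - ?KL c + ln (?a c) + \<Gamma>"
    and KL: "0 \<le> ?KL c" if c: "c \<in> {1..K}" for c
  proof -
    have "Ys c \<subseteq> Ytilde K Ys" using c by (auto simp: Ytilde_def)
    with g have "(1 / tau) * (fX x \<bullet> fY y) = ln (p x y / (margX MX MY p x * margY MX MY p y)) + \<Gamma>"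
      if "y \<in> Ys c" for y
      using that by blast
    with pos[OF c] have "wbar MX MY p fY tau (Ys c) \<bullet> fX x
        = - ?KL c + ln (?a c) - ln (probY MX MY p (Ys c)) + \<Gamma>"
      by (intro wbar_inner_eq Ys_pos a m iw ikl c)
    then show "hbar MX MY p fX fY tau Ys x c = - ?KL c + ln (?a c) + \<Gamma>"
      by (simp add: hbar_def)
    show "0 \<le> ?KL c"
      using pos[OF c] by (intro KL_dens_densY_restr_nonneg Ys_pos a m ikl c)
  qed
  have a_nonzero: "?a c \<noteq> 0" if "c \<in> {1..K}" for c using a[OF that] by simp
  have "PC_Y MX MY p K Ys x = (\<lambda>c. ?a c / (\<Sum>i=1..K. ?a i))"
    using probY_cond_Ytilde_eq_sum[OF Ys_sets Ys_disj a_nonzero] by (simp add: PC_Y_def fun_eq_iff)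
  then show ?thesis
    using P0 P1 a KL hbar by (simp only:) (rule cross_entropy_diff_le; auto)
qed

theorem theorem1:
  fixes MX :: "'x measure" and MY :: "'y measure"
    and p :: "'x \<Rightarrow> 'y \<Rightarrow> real"
    and PC :: "'x \<Rightarrow> nat \<Rightarrow> real" and K :: nat
    and Ys :: "nat \<Rightarrow> 'y set"
    and fX :: "'x \<Rightarrow> real^'d" and fY :: "'y \<Rightarrow> real^'d"
    and tau \<Gamma> :: real
    and hstar :: "'x \<Rightarrow> nat \<Rightarrow> real"
  assumes sfX: "sigma_finite_measure MX" and sfY: "sigma_finite_measure MY"
    and p_nonneg: "\<And>x y. x \<in> space MX \<Longrightarrow> y \<in> space MY \<Longrightarrow> 0 \<le> p x y"
    and p_meas: "(\<lambda>(x, y). p x y) \<in> borel_measurable (MX \<Otimes>\<^sub>M MY)"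
    and p_int: "integrable (MX \<Otimes>\<^sub>M MY) (\<lambda>(x, y). p x y)"
    and p_norm: "(\<integral>z. (\<lambda>(x, y). p x y) z \<partial>(MX \<Otimes>\<^sub>M MY)) = 1"
    and PC_nonneg: "\<And>x c. x \<in> space MX \<Longrightarrow> c \<in> {1..K} \<Longrightarrow> 0 \<le> PC x c"
    and PC_sum: "\<And>x. x \<in> space MX \<Longrightarrow> (\<Sum>c=1..K. PC x c) = 1"
    and PC_meas: "\<And>c. (\<lambda>x. PC x c) \<in> borel_measurable MX"
    and Ys_sets: "\<And>i. i \<in> {1..K} \<Longrightarrow> Ys i \<in> sets MY"
    and Ys_disj: "disjoint_family_on Ys {1..K}"
    and Ys_pos: "\<And>i. i \<in> {1..K} \<Longrightarrow> 0 < probY MX MY p (Ys i)"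
    and tau_pos: "0 < tau"
    and gstar: "\<And>x y. x \<in> space MX \<Longrightarrow> 0 < margX MX MY p x \<Longrightarrow> y \<in> Ytilde K Ys \<Longrightarrow>
                  0 < p x y / (margX MX MY p x * margY MX MY p y) \<and>
                  (1 / tau) * (fX x \<bullet> fY y)
                    = ln (p x y / (margX MX MY p x * margY MX MY p y)) + \<Gamma>"
    and condpos: "\<And>x i. x \<in> space MX \<Longrightarrow> 0 < margX MX MY p x \<Longrightarrow> i \<in> {1..K} \<Longrightarrow>
                  0 < probY_cond MX MY p x (Ys i)"
    and wbar_int: "\<And>i. i \<in> {1..K} \<Longrightarrow> integrable MY (wbar_integrand MX MY p fY tau (Ys i))"
    and hbar_int: "integrable MX (Lsup_integrand MX MY p PC K (hbar MX MY p fX fY tau Ys))"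
    and KL1_int: "integrable MX (\<lambda>x. margX MX MY p x * KL_fin K (PC x) (PC_Y MX MY p K Ys x))"
    and KL2_inner_int: "\<And>x c. x \<in> space MX \<Longrightarrow> 0 < margX MX MY p x \<Longrightarrow> c \<in> {1..K} \<Longrightarrow>
                  integrable MY (\<lambda>y. kl_pt (densY_restr MX MY p (Ys c) y)
                                             (densY_restr_cond MX MY p x (Ys c) y))"
    and KL2_int: "integrable MX (\<lambda>x. margX MX MY p x *
                  (\<Sum>c=1..K. PC x c * KL_dens MY (densY_restr MX MY p (Ys c))
                                                  (densY_restr_cond MX MY p x (Ys c))))"
    and hstar_meas: "\<And>i. (\<lambda>x. hstar x i) \<in> borel_measurable MX"
    and hstar_int: "integrable MX (Lsup_integrand MX MY p PC K hstar)"
    and hstar_min: "\<And>h. (\<And>i. (\<lambda>x. h x i) \<in> borel_measurable MX) \<Longrightarrow>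
                  integrable MX (Lsup_integrand MX MY p PC K h) \<Longrightarrow>
                  Lsup MX MY p PC K hstar \<le> Lsup MX MY p PC K h"
  shows "Lsup MX MY p PC K (hbar MX MY p fX fY tau Ys) - Lsup MX MY p PC K hstar
     \<le> (\<integral>x. margX MX MY p x * KL_fin K (PC x) (PC_Y MX MY p K Ys x) \<partial>MX)
       + (\<integral>x. margX MX MY p x *
            (\<Sum>c=1..K. PC x c * KL_dens MY (densY_restr MX MY p (Ys c))
                                            (densY_restr_cond MX MY p x (Ys c))) \<partial>MX)"
proof -
  let ?m = "margX MX MY p"
  let ?KL = "\<lambda>x c. KL_dens MY (densY_restr MX MY p (Ys c)) (densY_restr_cond MX MY p x (Ys c))"
  have m_nonneg: "0 \<le> ?m x" if "x \<in> space MX" for x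
    by (rule margX_nonneg) (rule p_nonneg[OF that])
  have Ytilde_nonneg: "0 \<le> p x y \<and> 0 \<le> margY MX MY p y"
    if "x \<in> space MX" "y \<in> Ytilde K Ys" for x y
  proof -
    from that(2) obtain c where "c \<in> {1..K}" "y \<in> Ys c" by (auto simp: Ytilde_def)
    then have y: "y \<in> space MY" using Ys_sets sets.sets_into_space by blast
    have "0 \<le> margY MX MY p y" by (rule margY_nonneg) (rule p_nonneg[OF _ y])
    then show ?thesis using p_nonneg[OF that(1) y] by simp
  qed
  have gap: "Lsup_integrand MX MY p PC K (hbar MX MY p fX fY tau Ys) x
           - Lsup_integrand MX MY p PC K hstar x
      \<le> ?m x * KL_fin K (PC x) (PC_Y MX MY p K Ys x) + ?m x * (\<Sum>c=1..K. PC x c * ?KL x c)"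
    if x: "x \<in> space MX" for x
  proof (cases "?m x = 0")
    case False
    with m_nonneg[OF x] have m: "0 < ?m x" by simp
    have "(\<Sum>c=1..K. PC x c * softmax_nll K (hbar MX MY p fX fY tau Ys x) c)
          - (\<Sum>c=1..K. PC x c * softmax_nll K (hstar x) c)
      \<le> KL_fin K (PC x) (PC_Y MX MY p K Ys x) + (\<Sum>c=1..K. PC x c * ?KL x c)"
      using PC_nonneg[OF x] PC_sum[OF x] Ys_sets Ys_disj Ys_pos m condpos[OF x m]
        Ytilde_nonneg[OF x] gstar[OF x m] wbar_int KL2_inner_int[OF x m]
      by (rule cross_entropy_hbar_diff_le)
    from mult_left_mono[OF this m_nonneg[OF x]] show ?thesis
      by (simp add: Lsup_integrand_def algebra_simps)
  qed (simp add: Lsup_integrand_def)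
  have "Lsup MX MY p PC K (hbar MX MY p fX fY tau Ys) - Lsup MX MY p PC K hstar
     = (\<integral>x. Lsup_integrand MX MY p PC K (hbar MX MY p fX fY tau Ys) x
           - Lsup_integrand MX MY p PC K hstar x \<partial>MX)"
    unfolding Lsup_def using hbar_int hstar_int by simp
  also have "\<dots> \<le> (\<integral>x. ?m x * KL_fin K (PC x) (PC_Y MX MY p K Ys x)
                       + ?m x * (\<Sum>c=1..K. PC x c * ?KL x c) \<partial>MX)"
    using hbar_int hstar_int KL1_int KL2_int gap by (intro integral_mono) auto
  also have "\<dots> = (\<integral>x. ?m x * KL_fin K (PC x) (PC_Y MX MY p K Ys x) \<partial>MX)
                 + (\<integral>x. ?m x * (\<Sum>c=1..K. PC x c * ?KL x c) \<partial>MX)"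
    using KL1_int KL2_int by (rule Bochner_Integration.integral_add)
  finally show ?thesis .
qed

end
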